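(* For each integer $n\ge0$ let $\theta^\Delta_n(x)=\sum_{k=0}^n\frac{(n+k)!}{2^k(n-k)!\,k!}(x)_{n-k}$, where $(x)_j=x(x-1)\cdots(x-j+1)$ and $(x)_0=1$. Then for every $n\ge1$ and every $x\in\mathbb{C}$, \[ \theta^\Delta_n(x+1)-2\theta^\Delta_n(x)+x\,\theta^\Delta_{n-1}(x-1)=0, \] \[ \theta^\Delta_{n+1}(x)+(x-2n-1)\theta^\Delta_n(x)-2x\,\theta^\Delta_n(x-1)=0 . \] *)

theory Defs
  imports Complex_Main
begin

definition falling_fact :: "complex \<Rightarrow> nat \<Rightarrow> complex" where
  "falling_fact x j = (\<Prod>i<j. x - of_nat i)"

definition thetaD :: "nat \<Rightarrow> complex \<Rightarrow> complex" where
  "thetaD n x = (\<Sum>k=0..n. of_nat (fact (n + k)) / (2 ^ k * of_nat (fact (n - k)) * of_nat (fact k))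
                   * falling_fact x (n - k))"

end

theory Submission
  imports Defs
begin

text \<open>
  In the falling-factorial basis, \<open>\<theta>\<^sub>n(x) = \<Sum>\<^sub>j a(n,j) (x)\<^sub>j\<close> with
  \<open>a(n,j) = (2n-j)! / (2^(n-j) j! (n-j)!)\<close>. Translating by 1 and multiplying by \<open>x\<close>
  act on this basis by index shifts: \<open>(x+1)\<^bsub>j+1\<^esub> = (x)\<^bsub>j+1\<^esub> + (j+1) (x)\<^sub>j\<close>,
  \<open>x (x-1)\<^sub>j = (x)\<^bsub>j+1\<^esub>\<close> and \<open>x (x)\<^sub>j = (x)\<^bsub>j+1\<^esub> + j (x)\<^sub>j\<close>. Comparing coefficients,
  both identities become two-term recurrences for \<open>a(n,j)\<close>, which are identities
  between factorials.
\<close>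

lemma falling_fact_0 [simp]: "falling_fact x 0 = 1"
  by (simp add: falling_fact_def)

lemma falling_fact_Suc: "falling_fact x (Suc j) = falling_fact x j * (x - of_nat j)"
  by (simp add: falling_fact_def)

lemma mult_falling_fact_minus_one: "x * falling_fact (x - 1) j = falling_fact x (Suc j)"
  unfolding falling_fact_def prod.lessThan_Suc_shift by (simp add: algebra_simps)

lemma mult_falling_fact: "x * falling_fact x j = falling_fact x (Suc j) + of_nat j * falling_fact x j"
  by (simp add: falling_fact_Suc algebra_simps)

lemma falling_fact_plus_one_Suc:
  "falling_fact (x + 1) (Suc j) = falling_fact x (Suc j) + of_nat (Suc j) * falling_fact x j"
proof -
  have "falling_fact (x + 1) (Suc j) = (x + 1) * falling_fact x j"
    using mult_falling_fact_minus_one[of "x + 1" j] by simp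
  also have "\<dots> = falling_fact x (Suc j) + of_nat (Suc j) * falling_fact x j"
    by (simp add: mult_falling_fact algebra_simps)
  finally show ?thesis .
qed

definition coeff_shift :: "(nat \<Rightarrow> complex) \<Rightarrow> nat \<Rightarrow> complex" where
  "coeff_shift c j = (case j of 0 \<Rightarrow> 0 | Suc i \<Rightarrow> c i)"

lemma sum_falling_fact_Suc:
  "(\<Sum>j<N. c j * falling_fact x (Suc j)) = (\<Sum>j<Suc N. coeff_shift c j * falling_fact x j)"
  unfolding sum.lessThan_Suc_shift by (simp add: coeff_shift_def)

lemma sum_falling_fact_plus_one:
  assumes "c N = 0"
  shows "(\<Sum>j<N. c j * falling_fact (x + 1) j)
           = (\<Sum>j<N. (c j + of_nat (Suc j) * c (Suc j)) * falling_fact x j)"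
proof (cases N)
  case (Suc M)
  have "(\<Sum>j<Suc M. c j * falling_fact (x + 1) j)
      = c 0 + (\<Sum>j<M. c (Suc j) * falling_fact x (Suc j))
          + (\<Sum>j<M. of_nat (Suc j) * c (Suc j) * falling_fact x j)"
    unfolding sum.lessThan_Suc_shift falling_fact_plus_one_Suc
    by (simp add: sum.distrib algebra_simps del: sum.lessThan_Suc)
  also have "c 0 + (\<Sum>j<M. c (Suc j) * falling_fact x (Suc j)) = (\<Sum>j<Suc M. c j * falling_fact x j)"
    unfolding sum.lessThan_Suc_shift by simp
  also have "(\<Sum>j<M. of_nat (Suc j) * c (Suc j) * falling_fact x j)
      = (\<Sum>j<Suc M. of_nat (Suc j) * c (Suc j) * falling_fact x j)"
    using assms Suc by simp
  finally show ?thesis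
    using Suc by (simp add: sum.distrib algebra_simps del: sum.lessThan_Suc)
qed simp

text \<open>The coefficient of \<open>(x)\<^sub>j\<close> in \<open>thetaD n\<close>: the summand \<open>k = n - j\<close> of \<open>thetaD_def\<close>.\<close>
definition thetaD_coeff :: "nat \<Rightarrow> nat \<Rightarrow> complex" where
  "thetaD_coeff n j = (if j \<le> n then fact (2*n - j) / (2^(n-j) * fact j * fact (n-j)) else 0)"

lemma thetaD_coeff_eq_0: "n < j \<Longrightarrow> thetaD_coeff n j = 0"
  by (simp add: thetaD_coeff_def)

lemma thetaD_coeff_diag: "thetaD_coeff n n = 1"
  by (simp add: thetaD_coeff_def)

lemma thetaD_eq_coeff_sum:
  assumes "n < N"
  shows "thetaD n x = (\<Sum>j<N. thetaD_coeff n j * falling_fact x j)"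
proof -
  have "thetaD n x = (\<Sum>k\<le>n. thetaD_coeff n (n - k) * falling_fact x (n - k))"
    unfolding thetaD_def atLeast0AtMost
  proof (rule sum.cong)
    fix k assume "k \<in> {..n}"
    then have "2*n - (n-k) = n + k" "n - (n-k) = k" by auto
    then show "of_nat (fact (n + k)) / (2 ^ k * of_nat (fact (n - k)) * of_nat (fact k)) * falling_fact x (n - k)
        = thetaD_coeff n (n - k) * falling_fact x (n - k)"
      by (simp add: thetaD_coeff_def of_nat_fact mult_ac)
  qed simp
  also have "\<dots> = (\<Sum>j\<le>n. thetaD_coeff n j * falling_fact x j)"
    by (rule sum.reindex_bij_witness[where i="\<lambda>j. n - j" and j="\<lambda>j. n - j"]) auto
  also have "\<dots> = (\<Sum>j<N. thetaD_coeff n j * falling_fact x j)"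
    using assms by (intro sum.mono_neutral_left) (auto simp: thetaD_coeff_eq_0)
  finally show ?thesis .
qed

lemma thetaD_coeff_Suc_diff:
  "thetaD_coeff (Suc m) j
     = of_nat (Suc j) * thetaD_coeff (Suc m) (Suc j) + coeff_shift (thetaD_coeff m) j"
proof (cases "m < j")
  case True
  then show ?thesis
    by (cases "j = Suc m") (auto simp: thetaD_coeff_eq_0 thetaD_coeff_diag coeff_shift_def split: nat.split)
next
  case False
  then obtain e where "m = j + e" using le_iff_add by (auto simp: not_less)
  then show ?thesis
    by (cases j) (simp_all add: coeff_shift_def thetaD_coeff_def fact_Suc field_simps del: of_nat_Suc,
        simp_all add: numeral_eq_Suc algebra_simps)
qed

lemma thetaD_coeff_Suc:
  "thetaD_coeff (Suc n) j
     = coeff_shift (thetaD_coeff n) j + (2 * of_nat n + 1 - of_nat j) * thetaD_coeff n j"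
proof (cases "n < j")
  case True
  then show ?thesis
    by (cases "j = Suc n") (auto simp: thetaD_coeff_eq_0 thetaD_coeff_diag coeff_shift_def split: nat.split)
next
  case False
  then obtain e where "n = j + e" using le_iff_add by (auto simp: not_less)
  then show ?thesis
    by (cases j) (simp_all add: coeff_shift_def thetaD_coeff_def fact_Suc field_simps del: of_nat_Suc,
        simp_all add: numeral_eq_Suc algebra_simps)
qed

lemma thetaD_plus_one:
  "thetaD n (x + 1)
     = (\<Sum>j<Suc n. (thetaD_coeff n j + of_nat (Suc j) * thetaD_coeff n (Suc j)) * falling_fact x j)"
  using thetaD_eq_coeff_sum[of n "Suc n"]
  by (simp add: sum_falling_fact_plus_one thetaD_coeff_eq_0 del: sum.lessThan_Suc)

lemma mult_thetaD_minus_one: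
  "x * thetaD n (x - 1) = (\<Sum>j<Suc (Suc n). coeff_shift (thetaD_coeff n) j * falling_fact x j)"
  by (simp add: thetaD_eq_coeff_sum[of n "Suc n"] sum_distrib_left mult.left_commute[of x]
      mult_falling_fact_minus_one sum_falling_fact_Suc del: sum.lessThan_Suc)

lemma mult_thetaD:
  "x * thetaD n x
     = (\<Sum>j<Suc (Suc n). (coeff_shift (thetaD_coeff n) j + of_nat j * thetaD_coeff n j) * falling_fact x j)"
proof -
  have "x * (thetaD_coeff n j * falling_fact x j)
      = thetaD_coeff n j * falling_fact x (Suc j) + of_nat j * thetaD_coeff n j * falling_fact x j" for j
    unfolding mult.left_commute[of x] mult_falling_fact by (simp add: algebra_simps)
  then have "x * thetaD n x = (\<Sum>j<Suc n. thetaD_coeff n j * falling_fact x (Suc j))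
      + (\<Sum>j<Suc n. of_nat j * thetaD_coeff n j * falling_fact x j)"
    by (simp only: thetaD_eq_coeff_sum[of n "Suc n"] sum_distrib_left sum.distrib lessI)
  also have "\<dots> = (\<Sum>j<Suc (Suc n). coeff_shift (thetaD_coeff n) j * falling_fact x j)
      + (\<Sum>j<Suc (Suc n). of_nat j * thetaD_coeff n j * falling_fact x j)"
    by (simp add: sum_falling_fact_Suc thetaD_coeff_eq_0 del: sum.lessThan_Suc) (simp add: thetaD_coeff_eq_0)
  finally show ?thesis
    by (simp only: sum.distrib distrib_right)
qed

lemma thetaD_difference_recurrence:
  "thetaD (Suc m) (x + 1) - 2 * thetaD (Suc m) x + x * thetaD m (x - 1) = 0"
proof -
  let ?c = "thetaD_coeff (Suc m)"
  have "thetaD (Suc m) (x + 1) - 2 * thetaD (Suc m) x + x * thetaD m (x - 1)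
      = (\<Sum>j<Suc (Suc m). (?c j + of_nat (Suc j) * ?c (Suc j)) * falling_fact x j)
        - 2 * (\<Sum>j<Suc (Suc m). ?c j * falling_fact x j)
        + (\<Sum>j<Suc (Suc m). coeff_shift (thetaD_coeff m) j * falling_fact x j)"
    by (subst thetaD_plus_one, subst mult_thetaD_minus_one, subst thetaD_eq_coeff_sum[OF lessI]) (rule refl)
  also have "\<dots> = (\<Sum>j<Suc (Suc m). (?c j + of_nat (Suc j) * ?c (Suc j) - 2 * ?c j
            + coeff_shift (thetaD_coeff m) j) * falling_fact x j)"
    by (simp only: sum_distrib_left sum_subtractf[symmetric] sum.distrib[symmetric]) (simp add: algebra_simps)
  also have "\<dots> = 0"
  proof -
    have "?c j + of_nat (Suc j) * ?c (Suc j) - 2 * ?c j + coeff_shift (thetaD_coeff m) j = 0" for j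
      using thetaD_coeff_Suc_diff[of m j] by simp
    then show ?thesis by simp
  qed
  finally show ?thesis .
qed

lemma thetaD_three_term_recurrence:
  "thetaD (Suc n) x + (x - 2 * of_nat n - 1) * thetaD n x - 2 * x * thetaD n (x - 1) = 0"
proof -
  let ?c = "thetaD_coeff n" and ?N = "Suc (Suc n)"
  have "thetaD (Suc n) x + (x - 2 * of_nat n - 1) * thetaD n x - 2 * x * thetaD n (x - 1)
      = thetaD (Suc n) x + x * thetaD n x - (2 * of_nat n + 1) * thetaD n x - 2 * (x * thetaD n (x - 1))"
    by (simp add: algebra_simps)
  also have "\<dots> = (\<Sum>j<?N. thetaD_coeff (Suc n) j * falling_fact x j)
        + (\<Sum>j<?N. (coeff_shift ?c j + of_nat j * ?c j) * falling_fact x j)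
        - (2 * of_nat n + 1) * (\<Sum>j<?N. ?c j * falling_fact x j)
        - 2 * (\<Sum>j<?N. coeff_shift ?c j * falling_fact x j)"
    by (subst mult_thetaD, subst mult_thetaD_minus_one) (simp only: thetaD_eq_coeff_sum[of _ ?N] lessI less_SucI)
  also have "\<dots> = (\<Sum>j<?N. (thetaD_coeff (Suc n) j + (coeff_shift ?c j + of_nat j * ?c j)
            - (2 * of_nat n + 1) * ?c j - 2 * coeff_shift ?c j) * falling_fact x j)"
    by (simp only: sum_distrib_left sum_subtractf[symmetric] sum.distrib[symmetric]) (simp add: algebra_simps)
  also have "\<dots> = 0"
    by (simp add: thetaD_coeff_Suc[of n] algebra_simps del: sum.lessThan_Suc)
  finally show ?thesis .
qed

theorem mainTheorem12:
  fixes n :: nat and x :: complex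
  assumes "n \<ge> 1"
  shows "thetaD n (x + 1) - 2 * thetaD n x + x * thetaD (n - 1) (x - 1) = 0 \<and>
         thetaD (n + 1) x + (x - 2 * of_nat n - 1) * thetaD n x - 2 * x * thetaD n (x - 1) = 0"
proof
  obtain m where "n = Suc m" using assms by (cases n) auto
  then show "thetaD n (x + 1) - 2 * thetaD n x + x * thetaD (n - 1) (x - 1) = 0"
    using thetaD_difference_recurrence[of m x] by simp
  show "thetaD (n + 1) x + (x - 2 * of_nat n - 1) * thetaD n x - 2 * x * thetaD n (x - 1) = 0"
    using thetaD_three_term_recurrence[of n x] by simp
qed

end
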